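(* Let $\mathbf L=(L,\le,\wedge,\vee,0,1,\nu)$ be a bounded lattice with an antitone map $\nu$, and let $\mathbb V$ be one of the varieties $\mathbb M,\mathbb G,\mathbb{INV},\mathbb{DMA},\mathbb O,\mathbb{BA}$. If $\mathbf L\in\mathbb V$, then the full complex algebra $(\mathcal G(X),\subseteq,\bigcap,\bigvee,\emptyset,X,(\cdot)^* )$ of its canonical frame (which is a canonical extension of $\mathbf L$ with $(\cdot)^*$ the $\pi$-extension of $\nu$) also belongs to $\mathbb V$. Thus each of these varieties is closed under canonical extensions.
   Context: Varieties: $\mathbb M$: bounded lattices with antitone $\nu$, $\nu0=1$, $\nu(a\vee b)=\nu a\wedge\nu b$; $\mathbb G$: $\mathbb M$ plus $a\le\nu\nu a$; $\mathbb{INV}$: $\nu$ an antitone involution ($\nu\nu a=a$); $\mathbb{DMA}$: $\mathbb{INV}$ plus distributivity (De Morgan algebras); $\mathbb O$: $\mathbb{INV}$ plus $a\wedge\nu a=0$ (ortholattices); $\mathbb{BA}$: Boolean algebras with $\nu$ the complement. Canonical frame of $\mathbf L$: $X$ the proper filters, $Y$ the proper ideals, $x\parallel y$ iff $x\cap y\neq\emptyset$; $\widehat\nu(x)$ is the ideal generated by $\{\nu a:a\in x\}$; $yS_\vee x$ iff $\widehat\nu(x)\subseteq y$. For $U\subseteq X$, $U'=\{y:\forall x\in U\;x\parallel y\}$; for $V\subseteq Y$, $V'=\{x:\forall y\in V\;x\parallel y\}$; $\mathcal G(X)=\{A\subseteq X:A=A''\}$ with meets = intersections, joins $(\bigcup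 A_j)''$. $x\perp z$ iff $\forall y(yS_\vee z\Rightarrow x\parallel y)$; $A^*=\{x:\forall z\in A\;x\perp z\}$. *)

theory Defs
  imports Main
begin

definition bounded_lattice_on ::
  "'c set \<Rightarrow> ('c \<Rightarrow> 'c \<Rightarrow> bool) \<Rightarrow> ('c \<Rightarrow> 'c \<Rightarrow> 'c) \<Rightarrow> ('c \<Rightarrow> 'c \<Rightarrow> 'c) \<Rightarrow> 'c \<Rightarrow> 'c \<Rightarrow> bool" where
  "bounded_lattice_on C le mt jn bt tp \<longleftrightarrow>
     (\<forall>a\<in>C. le a a) \<and>
     (\<forall>a\<in>C. \<forall>b\<in>C. le a b \<and> le b a \<longrightarrow> a = b) \<and>
     (\<forall>a\<in>C. \<forall>b\<in>C. \<forall>c\<in>C. le a b \<and> le b c \<longrightarrow> le a c) \<and>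
     (\<forall>a\<in>C. \<forall>b\<in>C. mt a b \<in> C \<and> le (mt a b) a \<and> le (mt a b) b \<and>
                      (\<forall>c\<in>C. le c a \<and> le c b \<longrightarrow> le c (mt a b))) \<and>
     (\<forall>a\<in>C. \<forall>b\<in>C. jn a b \<in> C \<and> le a (jn a b) \<and> le b (jn a b) \<and>
                      (\<forall>c\<in>C. le a c \<and> le b c \<longrightarrow> le (jn a b) c)) \<and>
     bt \<in> C \<and> tp \<in> C \<and> (\<forall>a\<in>C. le bt a \<and> le a tp)"

definition distributive_on ::
  "'c set \<Rightarrow> ('c \<Rightarrow> 'c \<Rightarrow> 'c) \<Rightarrow> ('c \<Rightarrow> 'c \<Rightarrow> 'c) \<Rightarrow> bool" where
  "distributive_on C mt jn \<longleftrightarrow>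
     (\<forall>a\<in>C. \<forall>b\<in>C. \<forall>c\<in>C. mt a (jn b c) = jn (mt a b) (mt a c))"

definition M_alg ::
  "'c set \<Rightarrow> ('c \<Rightarrow> 'c \<Rightarrow> bool) \<Rightarrow> ('c \<Rightarrow> 'c \<Rightarrow> 'c) \<Rightarrow> ('c \<Rightarrow> 'c \<Rightarrow> 'c) \<Rightarrow> 'c \<Rightarrow> 'c \<Rightarrow> ('c \<Rightarrow> 'c) \<Rightarrow> bool" where
  "M_alg C le mt jn bt tp nu \<longleftrightarrow>
     bounded_lattice_on C le mt jn bt tp \<and>
     (\<forall>a\<in>C. nu a \<in> C) \<and>
     (\<forall>a\<in>C. \<forall>b\<in>C. le a b \<longrightarrow> le (nu b) (nu a)) \<and>
     nu bt = tp \<and>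
     (\<forall>a\<in>C. \<forall>b\<in>C. nu (jn a b) = mt (nu a) (nu b))"

datatype variety = VM | VG | VINV | VDMA | VO | VBA

definition in_variety ::
  "variety \<Rightarrow> 'c set \<Rightarrow> ('c \<Rightarrow> 'c \<Rightarrow> bool) \<Rightarrow> ('c \<Rightarrow> 'c \<Rightarrow> 'c) \<Rightarrow> ('c \<Rightarrow> 'c \<Rightarrow> 'c) \<Rightarrow> 'c \<Rightarrow> 'c \<Rightarrow> ('c \<Rightarrow> 'c) \<Rightarrow> bool" where
  "in_variety V C le mt jn bt tp nu \<longleftrightarrow> M_alg C le mt jn bt tp nu \<and>
     (case V of
        VM \<Rightarrow> True
      | VG \<Rightarrow> (\<forall>a\<in>C. le a (nu (nu a)))
      | VINV \<Rightarrow> (\<forall>a\<in>C. nu (nu a) = a)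
      | VDMA \<Rightarrow> (\<forall>a\<in>C. nu (nu a) = a) \<and> distributive_on C mt jn
      | VO \<Rightarrow> (\<forall>a\<in>C. nu (nu a) = a) \<and> (\<forall>a\<in>C. mt a (nu a) = bt)
      | VBA \<Rightarrow> distributive_on C mt jn \<and>
               (\<forall>a\<in>C. mt a (nu a) = bt \<and> jn a (nu a) = tp))"

definition is_filter :: "'a::bounded_lattice set \<Rightarrow> bool" where
  "is_filter F \<longleftrightarrow> F \<noteq> {} \<and> (\<forall>a\<in>F. \<forall>b. a \<le> b \<longrightarrow> b \<in> F) \<and> (\<forall>a\<in>F. \<forall>b\<in>F. inf a b \<in> F)"

definition is_ideal :: "'a::bounded_lattice set \<Rightarrow> bool" where
  "is_ideal I \<longleftrightarrow> I \<noteq> {} \<and> (\<forall>a\<in>I. \<forall>b. b \<le> a \<longrightarrow> b \<in> I) \<and> (\<forall>a\<in>I. \<forall>b\<in>I. sup a b \<in> I)"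

definition proper_filters :: "'a::bounded_lattice set set" where
  "proper_filters = {F. is_filter F \<and> F \<noteq> UNIV}"

definition proper_ideals :: "'a::bounded_lattice set set" where
  "proper_ideals = {I. is_ideal I \<and> I \<noteq> UNIV}"

definition ideal_gen :: "'a::bounded_lattice set \<Rightarrow> 'a set" where
  "ideal_gen S = \<Inter>{I. is_ideal I \<and> S \<subseteq> I}"

definition meets :: "'a set \<Rightarrow> 'a set \<Rightarrow> bool" where
  "meets x y \<longleftrightarrow> x \<inter> y \<noteq> {}"

definition nu_hat :: "('a::bounded_lattice \<Rightarrow> 'a) \<Rightarrow> 'a set \<Rightarrow> 'a set" where
  "nu_hat nu x = ideal_gen (nu ` x)"

definition S_vee :: "('a::bounded_lattice \<Rightarrow> 'a) \<Rightarrow> 'a set \<Rightarrow> 'a set \<Rightarrow> bool" where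
  "S_vee nu y x \<longleftrightarrow> nu_hat nu x \<subseteq> y"

text \<open>U' for U a set of filters (a set of ideals), and V' for V a set of ideals (a set of filters).\<close>
definition polarX :: "'a::bounded_lattice set set \<Rightarrow> 'a set set" where
  "polarX U = {y \<in> proper_ideals. \<forall>x\<in>U. meets x y}"

definition polarY :: "'a::bounded_lattice set set \<Rightarrow> 'a set set" where
  "polarY V = {x \<in> proper_filters. \<forall>y\<in>V. meets x y}"

definition Galois_sets :: "'a::bounded_lattice set set set" where
  "Galois_sets = {A. A \<subseteq> proper_filters \<and> polarY (polarX A) = A}"

definition G_join :: "'a::bounded_lattice set set \<Rightarrow> 'a set set \<Rightarrow> 'a set set" where
  "G_join A B = polarY (polarX (A \<union> B))"

definition perp :: "('a::bounded_lattice \<Rightarrow> 'a) \<Rightarrow> 'a set \<Rightarrow> 'a set \<Rightarrow> bool" where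
  "perp nu x z \<longleftrightarrow> (\<forall>y\<in>proper_ideals. S_vee nu y z \<longrightarrow> meets x y)"

definition star :: "('a::bounded_lattice \<Rightarrow> 'a) \<Rightarrow> 'a set set \<Rightarrow> 'a set set" where
  "star nu A = {x \<in> proper_filters. \<forall>z\<in>A. perp nu x z}"

end

theory Submission
  imports Defs
begin

text \<open>
  For antitone \<open>nu\<close>, the frame relation \<open>x \<perp> z\<close> just says that \<open>nu c \<in> x\<close> for some \<open>c \<in> z\<close>.
  With this description the laws of G, INV and O transfer filter by filter.
  The laws of M transfer because \<open>nu 0 = 1\<close> and \<open>nu (a \<squnion> b) = nu a \<sqinter> nu b\<close> make the
  preimage of a filter under \<open>nu\<close> an ideal, so that \<open>(\<cdot>)\<^sup>*\<close> cannot distinguish a set of filters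
  from its Galois closure. Distributivity and complementation rest on the prime filter theorem:
  in a distributive lattice a filter lies in \<open>U''\<close> iff every prime filter above it contains a
  member of \<open>U\<close>, so meets, joins and \<open>(\<cdot>)\<^sup>*\<close> of Galois sets can be tested on prime
  filters, and every prime filter lies in \<open>A\<close> or in \<open>A\<^sup>*\<close> when \<open>a \<squnion> nu a = 1\<close>.
\<close>

lemma filter_top: "is_filter F \<Longrightarrow> top \<in> F"
  unfolding is_filter_def by auto

lemma filter_up: "is_filter F \<Longrightarrow> a \<in> F \<Longrightarrow> a \<le> b \<Longrightarrow> b \<in> F"
  unfolding is_filter_def by auto

lemma filter_inf: "is_filter F \<Longrightarrow> a \<in> F \<Longrightarrow> b \<in> F \<Longrightarrow> inf a b \<in> F"
  unfolding is_filter_def by auto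

lemma ideal_bot: "is_ideal I \<Longrightarrow> bot \<in> I"
  unfolding is_ideal_def by auto

lemma ideal_down: "is_ideal I \<Longrightarrow> a \<in> I \<Longrightarrow> b \<le> a \<Longrightarrow> b \<in> I"
  unfolding is_ideal_def by auto

lemma ideal_sup: "is_ideal I \<Longrightarrow> a \<in> I \<Longrightarrow> b \<in> I \<Longrightarrow> sup a b \<in> I"
  unfolding is_ideal_def by auto

lemma proper_filters_is_filter: "x \<in> proper_filters \<Longrightarrow> is_filter x"
  unfolding proper_filters_def by auto

lemma proper_filters_bot: "x \<in> proper_filters \<Longrightarrow> bot \<notin> x"
  unfolding proper_filters_def is_filter_def by auto

lemma proper_ideals_is_ideal: "y \<in> proper_ideals \<Longrightarrow> is_ideal y"
  unfolding proper_ideals_def by auto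

lemma proper_ideal_iff: "y \<in> proper_ideals \<longleftrightarrow> is_ideal y \<and> top \<notin> y"
  unfolding proper_ideals_def is_ideal_def by auto

lemma proper_filter_iff: "x \<in> proper_filters \<longleftrightarrow> is_filter x \<and> bot \<notin> x"
  unfolding proper_filters_def is_filter_def by auto

section \<open>Galois-closed sets of filters\<close>

lemma meets_iff: "meets x y \<longleftrightarrow> (\<exists>a. a \<in> x \<and> a \<in> y)"
  unfolding meets_def by auto

abbreviation polar_closure :: "'a::bounded_lattice set set \<Rightarrow> 'a set set" where
  "polar_closure U \<equiv> polarY (polarX U)"

lemma polarX_antimono: "U \<subseteq> U' \<Longrightarrow> polarX U' \<subseteq> polarX U"
  unfolding polarX_def by auto

lemma polarY_antimono: "V \<subseteq> V' \<Longrightarrow> polarY V' \<subseteq> polarY V"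
  unfolding polarY_def by auto

lemma polarX_subset: "polarX U \<subseteq> proper_ideals"
  unfolding polarX_def by auto

lemma polarY_subset: "polarY V \<subseteq> proper_filters"
  unfolding polarY_def by auto

lemma polar_closure_extensive: "U \<subseteq> proper_filters \<Longrightarrow> U \<subseteq> polar_closure U"
  unfolding polarY_def polarX_def meets_iff by auto

lemma polarY_in_Galois_sets: "V \<subseteq> proper_ideals \<Longrightarrow> polarY V \<in> Galois_sets"
proof -
  assume "V \<subseteq> proper_ideals"
  then have "V \<subseteq> polarX (polarY V)"
    unfolding polarY_def polarX_def meets_iff by auto
  then have "polar_closure (polarY V) \<subseteq> polarY V"
    by (rule polarY_antimono)
  with polar_closure_extensive[OF polarY_subset] polarY_subset show ?thesis
    unfolding Galois_sets_def by blast
qed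

lemma polar_closure_in_Galois_sets: "polar_closure U \<in> Galois_sets"
  by (rule polarY_in_Galois_sets[OF polarX_subset])

lemma Galois_sets_subset: "A \<in> Galois_sets \<Longrightarrow> A \<subseteq> proper_filters"
  unfolding Galois_sets_def by auto

lemma Galois_sets_closed: "A \<in> Galois_sets \<Longrightarrow> polar_closure A = A"
  unfolding Galois_sets_def by auto

lemma polar_closure_least: "U \<subseteq> A \<Longrightarrow> A \<in> Galois_sets \<Longrightarrow> polar_closure U \<subseteq> A"
  by (metis Galois_sets_closed polarX_antimono polarY_antimono)

lemma Galois_sets_upward:
  assumes "A \<in> Galois_sets" "x \<in> A" "x \<subseteq> p" "p \<in> proper_filters"
  shows "p \<in> A"
proof -
  have "p \<in> polar_closure A"
    using assms(2-4) unfolding polarY_def polarX_def meets_iff by blast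
  then show ?thesis using Galois_sets_closed[OF assms(1)] by simp
qed

lemma empty_in_Galois_sets: "{} \<in> Galois_sets"
proof -
  have "x \<notin> polar_closure {}" for x :: "'a::bounded_lattice set"
  proof
    assume x: "x \<in> polar_closure {}"
    then have "x \<in> proper_filters" using polarY_subset by blast
    then have "bot \<notin> x" "top \<in> x" using proper_filters_bot filter_top proper_filters_is_filter by auto
    then have "(top :: 'a) \<noteq> bot" by auto
    then have "{bot :: 'a} \<in> proper_ideals"
      unfolding proper_ideal_iff is_ideal_def by (auto simp: bot_unique)
    with x \<open>bot \<notin> x\<close> show False unfolding polarY_def polarX_def meets_iff by auto
  qed
  then show ?thesis unfolding Galois_sets_def by auto
qed

lemma proper_filters_in_Galois_sets: "proper_filters \<in> Galois_sets"
  unfolding Galois_sets_def using polarY_subset polar_closure_extensive by blast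

lemma Galois_sets_Int:
  assumes "A \<in> Galois_sets" "B \<in> Galois_sets"
  shows "A \<inter> B \<in> Galois_sets"
proof -
  have sub: "A \<inter> B \<subseteq> proper_filters" using Galois_sets_subset[OF assms(1)] by blast
  have "polar_closure (A \<inter> B) \<subseteq> A" "polar_closure (A \<inter> B) \<subseteq> B"
    using polar_closure_least assms by blast+
  with polar_closure_extensive[OF sub] sub show ?thesis
    unfolding Galois_sets_def by blast
qed

lemma G_join_in_Galois_sets: "G_join A B \<in> Galois_sets"
  unfolding G_join_def by (rule polar_closure_in_Galois_sets)

lemma G_join_upper:
  assumes "A \<in> Galois_sets" "B \<in> Galois_sets"
  shows "A \<subseteq> G_join A B" "B \<subseteq> G_join A B"
  using polar_closure_extensive[of "A \<union> B"] Galois_sets_subset[OF assms(1)]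
    Galois_sets_subset[OF assms(2)] unfolding G_join_def by auto

lemma G_join_least: "A \<subseteq> C \<Longrightarrow> B \<subseteq> C \<Longrightarrow> C \<in> Galois_sets \<Longrightarrow> G_join A B \<subseteq> C"
  unfolding G_join_def by (rule polar_closure_least) auto

lemma bounded_lattice_Galois_sets:
  "bounded_lattice_on (Galois_sets :: 'a::bounded_lattice set set set) (\<subseteq>) (\<inter>) G_join {} proper_filters"
  unfolding bounded_lattice_on_def
proof (intro conjI ballI impI)
  fix A B :: "'a set set" assume A: "A \<in> Galois_sets" and B: "B \<in> Galois_sets"
  show "A \<inter> B \<in> Galois_sets" using Galois_sets_Int[OF A B] .
  show "A \<subseteq> G_join A B" "B \<subseteq> G_join A B" using G_join_upper[OF A B] by auto
  fix C assume "C \<in> Galois_sets" "A \<subseteq> C \<and> B \<subseteq> C"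
  then show "G_join A B \<subseteq> C" using G_join_least by blast
qed (use G_join_in_Galois_sets Galois_sets_subset empty_in_Galois_sets
      proper_filters_in_Galois_sets in auto)

section \<open>The operation \<open>star\<close>\<close>

lemma S_vee_iff: "is_ideal y \<Longrightarrow> S_vee nu y z \<longleftrightarrow> nu ` z \<subseteq> y"
  unfolding S_vee_def nu_hat_def ideal_gen_def by auto

lemma star_eq_polarY: "star nu A = polarY {y \<in> proper_ideals. \<exists>z\<in>A. S_vee nu y z}"
  unfolding star_def polarY_def perp_def by auto

lemma star_in_Galois_sets: "star nu A \<in> Galois_sets"
  unfolding star_eq_polarY by (rule polarY_in_Galois_sets) auto

lemma star_antimono: "A \<subseteq> B \<Longrightarrow> star nu B \<subseteq> star nu A"
  unfolding star_def by auto

lemma star_empty: "star nu {} = proper_filters"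
  unfolding star_def by auto

lemma ideal_below_image:
  assumes "antimono nu" "is_filter z"
  shows "is_ideal {b. \<exists>c\<in>z. b \<le> nu c}"
  unfolding is_ideal_def
proof (intro conjI ballI allI impI)
  show "{b. \<exists>c\<in>z. b \<le> nu c} \<noteq> {}" using assms(2) unfolding is_filter_def by auto
next
  fix a b assume "a \<in> {b. \<exists>c\<in>z. b \<le> nu c}" "b \<le> a"
  then show "b \<in> {b. \<exists>c\<in>z. b \<le> nu c}" by (auto intro: order_trans)
next
  fix a b assume "a \<in> {b. \<exists>c\<in>z. b \<le> nu c}" "b \<in> {b. \<exists>c\<in>z. b \<le> nu c}"
  then obtain c d where "c \<in> z" "a \<le> nu c" "d \<in> z" "b \<le> nu d" by auto
  moreover have "nu c \<le> nu (inf c d)" "nu d \<le> nu (inf c d)"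
    using assms(1) unfolding antimono_def by auto
  ultimately show "sup a b \<in> {b. \<exists>c\<in>z. b \<le> nu c}"
    using filter_inf[OF assms(2)] by (blast intro: le_supI order_trans)
qed

text \<open>The nontrivial direction tests \<open>x\<close> against the ideal generated by \<open>nu ` z\<close>, which is
  proper unless \<open>nu c = top\<close> for some \<open>c \<in> z\<close>.\<close>

lemma perp_iff:
  assumes anti: "antimono nu" and x: "is_filter x" and z: "is_filter z"
  shows "perp nu x z \<longleftrightarrow> (\<exists>c\<in>z. nu c \<in> x)"
proof
  assume "\<exists>c\<in>z. nu c \<in> x"
  then show "perp nu x z"
    unfolding perp_def meets_iff using S_vee_iff proper_ideals_is_ideal by blast
next
  assume perp: "perp nu x z"
  define J where "J = {b. \<exists>c\<in>z. b \<le> nu c}"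
  have J: "is_ideal J" unfolding J_def by (rule ideal_below_image[OF anti z])
  show "\<exists>c\<in>z. nu c \<in> x"
  proof (cases "top \<in> J")
    case True
    then show ?thesis using filter_top[OF x] filter_up[OF x] unfolding J_def by blast
  next
    case False
    then have "J \<in> proper_ideals" using J proper_ideal_iff by blast
    moreover have "S_vee nu J z" using S_vee_iff[OF J] unfolding J_def by auto
    ultimately have "meets x J" using perp unfolding perp_def by blast
    then show ?thesis using filter_up[OF x] unfolding meets_iff J_def by blast
  qed
qed

lemma mem_star_iff:
  assumes "antimono nu" "A \<subseteq> proper_filters"
  shows "x \<in> star nu A \<longleftrightarrow> x \<in> proper_filters \<and> (\<forall>z\<in>A. \<exists>c\<in>z. nu c \<in> x)"
proof -
  have "perp nu x z \<longleftrightarrow> (\<exists>c\<in>z. nu c \<in> x)" if "x \<in> proper_filters" "z \<in> A" for z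
    using perp_iff[OF assms(1)] proper_filters_is_filter assms(2) that by blast
  then show ?thesis unfolding star_def by auto
qed

lemma ideal_preimage_filter:
  assumes anti: "antimono nu" and "nu bot = top" "\<And>a b. nu (sup a b) = inf (nu a) (nu b)"
    and x: "is_filter x"
  shows "is_ideal {a. nu a \<in> x}"
  unfolding is_ideal_def
proof (intro conjI ballI allI impI)
  show "{a. nu a \<in> x} \<noteq> {}" using assms(2) filter_top[OF x] by (metis empty_iff mem_Collect_eq)
next
  fix a b assume "a \<in> {a. nu a \<in> x}" "b \<le> a"
  then show "b \<in> {a. nu a \<in> x}" using anti filter_up[OF x] unfolding antimono_def by blast
next
  fix a b assume "a \<in> {a. nu a \<in> x}" "b \<in> {a. nu a \<in> x}"
  then show "sup a b \<in> {a. nu a \<in> x}" using assms(3) filter_inf[OF x] by simp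
qed

lemma star_polar_closure:
  assumes anti: "antimono nu" and nu_bot: "nu bot = top"
    and nu_sup: "\<And>a b. nu (sup a b) = inf (nu a) (nu b)" and U: "U \<subseteq> proper_filters"
  shows "star nu (polar_closure U) = star nu U"
proof
  show "star nu (polar_closure U) \<subseteq> star nu U"
    by (rule star_antimono[OF polar_closure_extensive[OF U]])
next
  show "star nu U \<subseteq> star nu (polar_closure U)"
  proof
    fix x assume "x \<in> star nu U"
    then have x: "x \<in> proper_filters" and xU: "\<forall>w\<in>U. \<exists>c\<in>w. nu c \<in> x"
      using mem_star_iff[OF anti U] by auto
    define J where "J = {a. nu a \<in> x}"
    have J: "is_ideal J" unfolding J_def
      by (rule ideal_preimage_filter[OF anti nu_bot nu_sup proper_filters_is_filter[OF x]])
    have "\<exists>c\<in>z. nu c \<in> x" if z: "z \<in> polar_closure U" for z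
    proof (cases "top \<in> J")
      case True
      have "top \<in> z" using z polarY_subset proper_filters_is_filter filter_top by blast
      with True show ?thesis unfolding J_def by blast
    next
      case False
      have "meets w J" if "w \<in> U" for w
        using xU that unfolding meets_iff J_def by blast
      with False J have "J \<in> polarX U" unfolding polarX_def proper_ideal_iff by blast
      then have "meets z J" using z unfolding polarY_def by blast
      then show ?thesis unfolding meets_iff J_def by blast
    qed
    then show "x \<in> star nu (polar_closure U)"
      using mem_star_iff[OF anti polarY_subset] x by blast
  qed
qed

lemma M_alg_Galois_sets:
  fixes nu :: "'a::bounded_lattice \<Rightarrow> 'a"
  assumes M: "M_alg UNIV (\<le>) inf sup bot top nu" and anti: "antimono nu"
  shows "M_alg (Galois_sets :: 'a set set set) (\<subseteq>) (\<inter>) G_join {} proper_filters (star nu)"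
proof -
  have "nu bot = top" "\<And>a b. nu (sup a b) = inf (nu a) (nu b)"
    using M unfolding M_alg_def by auto
  then have "star nu (G_join A B) = star nu A \<inter> star nu B"
    if "A \<in> Galois_sets" "B \<in> Galois_sets" for A B :: "'a set set"
    using star_polar_closure[OF anti, of "A \<union> B"] Galois_sets_subset[OF that(1)]
      Galois_sets_subset[OF that(2)] unfolding G_join_def star_def by auto
  then show ?thesis
    unfolding M_alg_def
    by (simp add: bounded_lattice_Galois_sets star_in_Galois_sets star_antimono star_empty)
qed

lemma subset_star_star:
  assumes anti: "antimono nu" and G: "\<And>a. a \<le> nu (nu a)" and A: "A \<subseteq> proper_filters"
  shows "A \<subseteq> star nu (star nu A)"
proof
  fix x assume x: "x \<in> A"
  then have xf: "is_filter x" using A proper_filters_is_filter by blast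
  have starA: "star nu A \<subseteq> proper_filters" using star_in_Galois_sets Galois_sets_subset by blast
  have "\<exists>c\<in>w. nu c \<in> x" if "w \<in> star nu A" for w
  proof -
    have "\<forall>z\<in>A. \<exists>c\<in>z. nu c \<in> w" using that mem_star_iff[OF anti A] by simp
    then obtain d where "d \<in> x" "nu d \<in> w" using x by blast
    moreover have "nu (nu d) \<in> x" using filter_up[OF xf \<open>d \<in> x\<close> G] .
    ultimately show ?thesis by blast
  qed
  moreover have "x \<in> proper_filters" using x A by blast
  ultimately show "x \<in> star nu (star nu A)" by (simp add: mem_star_iff[OF anti starA])
qed

lemma filter_preimage_ideal:
  assumes anti: "antimono nu" and inv: "\<And>a. nu (nu a) = a"
    and nu_sup: "\<And>a b. nu (sup a b) = inf (nu a) (nu b)" and y: "is_ideal y"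
  shows "is_filter {c. nu c \<in> y}"
  unfolding is_filter_def
proof (intro conjI ballI allI impI)
  have "nu bot \<in> {c. nu c \<in> y}" using ideal_bot[OF y] by (simp add: inv)
  then show "{c. nu c \<in> y} \<noteq> {}" by blast
next
  fix a b assume "a \<in> {c. nu c \<in> y}" "a \<le> b"
  moreover have "nu b \<le> nu a" using anti \<open>a \<le> b\<close> unfolding antimono_def by blast
  ultimately show "b \<in> {c. nu c \<in> y}" using ideal_down[OF y] by blast
next
  fix a b assume ab: "a \<in> {c. nu c \<in> y}" "b \<in> {c. nu c \<in> y}"
  have "nu (inf a b) = nu (nu (sup (nu a) (nu b)))" by (simp add: nu_sup inv)
  also have "\<dots> = sup (nu a) (nu b)" by (rule inv)
  finally have "nu (inf a b) = sup (nu a) (nu b)" .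
  then show "inf a b \<in> {c. nu c \<in> y}" using ab ideal_sup[OF y] by simp
qed

lemma preimage_ideal_in_star:
  assumes anti: "antimono nu" and inv: "\<And>a. nu (nu a) = a"
    and nu_sup: "\<And>a b. nu (sup a b) = inf (nu a) (nu b)"
    and A: "A \<subseteq> proper_filters" and y: "y \<in> polarX A"
  shows "{c. nu c \<in> y} \<in> star nu A"
proof -
  have "y \<in> proper_ideals" using y polarX_subset by blast
  then have yi: "is_ideal y" and top: "top \<notin> y" by (simp_all add: proper_ideal_iff)
  have "is_filter {c. nu c \<in> y}" by (rule filter_preimage_ideal[OF anti inv nu_sup yi])
  moreover have "bot \<notin> {c. nu c \<in> y}"
  proof
    assume "bot \<in> {c. nu c \<in> y}"
    moreover have "nu (nu top) \<le> nu bot" using anti unfolding antimono_def by simp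
    ultimately show False using ideal_down[OF yi] inv top by simp
  qed
  moreover have "\<exists>c\<in>z. nu c \<in> {c. nu c \<in> y}" if "z \<in> A" for z
  proof -
    have "meets z y" using y that unfolding polarX_def by simp
    then obtain c where "c \<in> z" "c \<in> y" unfolding meets_iff by blast
    then show ?thesis using inv by auto
  qed
  ultimately show ?thesis by (simp add: mem_star_iff[OF anti A] proper_filter_iff)
qed

lemma star_star_Galois_set:
  assumes anti: "antimono nu" and inv: "\<And>a. nu (nu a) = a"
    and nu_sup: "\<And>a b. nu (sup a b) = inf (nu a) (nu b)" and A: "A \<in> Galois_sets"
  shows "star nu (star nu A) = A"
proof
  show "A \<subseteq> star nu (star nu A)"
    using subset_star_star[OF anti _ Galois_sets_subset[OF A]] inv by simp
next
  have starA: "star nu A \<subseteq> proper_filters" using star_in_Galois_sets Galois_sets_subset by blast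
  show "star nu (star nu A) \<subseteq> A"
  proof
    fix x assume "x \<in> star nu (star nu A)"
    then have x: "x \<in> proper_filters" and xw: "\<forall>w\<in>star nu A. \<exists>c\<in>w. nu c \<in> x"
      using mem_star_iff[OF anti starA] by auto
    have "meets x y" if y: "y \<in> polarX A" for y
    proof -
      from xw preimage_ideal_in_star[OF anti inv nu_sup Galois_sets_subset[OF A] y]
      have "\<exists>c\<in>{c. nu c \<in> y}. nu c \<in> x" by (rule bspec)
      then show ?thesis unfolding meets_iff by auto
    qed
    then have "x \<in> polar_closure A" using x unfolding polarY_def by blast
    then show "x \<in> A" using Galois_sets_closed[OF A] by simp
  qed
qed

lemma Int_star_empty:
  assumes anti: "antimono nu" and O: "\<And>a. inf a (nu a) = bot" and A: "A \<subseteq> proper_filters"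
  shows "A \<inter> star nu A = {}"
proof -
  have "x \<notin> star nu A" if x: "x \<in> A" for x
  proof
    assume "x \<in> star nu A"
    then have "\<exists>c\<in>x. nu c \<in> x" using x by (simp add: mem_star_iff[OF anti A])
    then obtain c where "c \<in> x" "nu c \<in> x" by blast
    moreover have xf: "x \<in> proper_filters" using x A by blast
    ultimately have "inf c (nu c) \<in> x" using filter_inf proper_filters_is_filter by blast
    then show False using O proper_filters_bot[OF xf] by simp
  qed
  then show ?thesis by blast
qed

section \<open>Prime filters\<close>

definition prime_filter :: "'a::bounded_lattice set \<Rightarrow> bool" where
  "prime_filter p \<longleftrightarrow> p \<in> proper_filters \<and> (\<forall>a b. sup a b \<in> p \<longrightarrow> a \<in> p \<or> b \<in> p)"

lemma prime_filter_compl: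
  assumes "prime_filter p"
  shows "- p \<in> proper_ideals"
proof -
  have p: "is_filter p" "bot \<notin> p" and prime: "\<And>a b. sup a b \<in> p \<Longrightarrow> a \<in> p \<or> b \<in> p"
    using assms unfolding prime_filter_def proper_filter_iff by auto
  have "is_ideal (- p)"
    unfolding is_ideal_def using p(2) filter_up[OF p(1)] prime by blast
  then show ?thesis using filter_top[OF p(1)] by (simp add: proper_ideal_iff)
qed

lemma filter_adjoin:
  assumes F: "is_filter F"
  shows "is_filter {d. \<exists>c\<in>F. inf c a \<le> d}"
  unfolding is_filter_def
proof (intro conjI ballI allI impI)
  show "{d. \<exists>c\<in>F. inf c a \<le> d} \<noteq> {}" using filter_top[OF F] by blast
next
  fix u v assume "u \<in> {d. \<exists>c\<in>F. inf c a \<le> d}" "u \<le> v"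
  then show "v \<in> {d. \<exists>c\<in>F. inf c a \<le> d}" by (blast intro: order_trans)
next
  fix u v assume "u \<in> {d. \<exists>c\<in>F. inf c a \<le> d}" "v \<in> {d. \<exists>c\<in>F. inf c a \<le> d}"
  then obtain c1 c2 where "c1 \<in> F" "inf c1 a \<le> u" "c2 \<in> F" "inf c2 a \<le> v" by blast
  moreover have "inf (inf c1 c2) a \<le> inf (inf c1 a) (inf c2 a)"
    by (simp add: le_infI1 le_infI2)
  ultimately show "inf u v \<in> {d. \<exists>c\<in>F. inf c a \<le> d}"
    using filter_inf[OF F] by (blast intro: order_trans inf_mono)
qed

lemma filter_Union_chain:
  assumes "C \<noteq> {}" and filters: "\<And>F. F \<in> C \<Longrightarrow> is_filter F" and "chain\<^sub>\<subseteq> C"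
  shows "is_filter (\<Union>C)"
  unfolding is_filter_def
proof (intro conjI ballI allI impI)
  obtain F where "F \<in> C" using assms(1) by blast
  then have "top \<in> \<Union>C" using filter_top[OF filters] by blast
  then show "\<Union>C \<noteq> {}" by blast
next
  fix a b assume "a \<in> \<Union>C" "a \<le> b"
  then obtain F where "F \<in> C" "a \<in> F" by blast
  then show "b \<in> \<Union>C" using filter_up[OF filters _ \<open>a \<le> b\<close>] by blast
next
  fix a b assume "a \<in> \<Union>C" "b \<in> \<Union>C"
  then obtain F1 F2 where F: "F1 \<in> C" "a \<in> F1" "F2 \<in> C" "b \<in> F2" by blast
  then consider "F1 \<subseteq> F2" | "F2 \<subseteq> F1" using assms(3) unfolding chain_subset_def by blast
  then show "inf a b \<in> \<Union>C"
  proof cases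
    case 1
    then show ?thesis using F filter_inf[OF filters[OF F(3)]] by blast
  next
    case 2
    then show ?thesis using F filter_inf[OF filters[OF F(1)]] by blast
  qed
qed

lemma maximal_disjoint_filter_prime:
  assumes D: "distributive_on (UNIV :: 'a::bounded_lattice set) inf sup" and y: "is_ideal (y :: 'a set)"
    and F: "is_filter F" "F \<inter> y = {}"
    and max: "\<And>G. is_filter G \<Longrightarrow> F \<subseteq> G \<Longrightarrow> G \<inter> y = {} \<Longrightarrow> G = F"
  shows "prime_filter F"
proof -
  have escape: "\<exists>c\<in>F. \<exists>i\<in>y. inf c a \<le> i" if "a \<notin> F" for a
  proof -
    let ?G = "{d. \<exists>c\<in>F. inf c a \<le> d}"
    have "F \<subseteq> ?G" by (auto intro: le_infI1)
    moreover have "a \<in> ?G" using filter_top[OF F(1)] by auto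
    ultimately have "?G \<noteq> F" using that by blast
    then have "?G \<inter> y \<noteq> {}" using max[OF filter_adjoin[OF F(1)] \<open>F \<subseteq> ?G\<close>] by blast
    then show ?thesis by auto
  qed
  have "a \<in> F \<or> b \<in> F" if ab: "sup a b \<in> F" for a b
  proof (rule ccontr)
    assume "\<not> (a \<in> F \<or> b \<in> F)"
    then obtain c1 i1 c2 i2 where c: "c1 \<in> F" "i1 \<in> y" "inf c1 a \<le> i1"
      "c2 \<in> F" "i2 \<in> y" "inf c2 b \<le> i2"
      using escape by meson
    let ?d = "inf c1 c2"
    have "inf ?d (sup a b) = sup (inf ?d a) (inf ?d b)"
      using D unfolding distributive_on_def by blast
    also have "\<dots> \<le> sup i1 i2"
    proof (rule sup_mono)
      show "inf ?d a \<le> i1" using c(3) by (meson inf.cobounded1 inf_mono order_refl order_trans)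
      show "inf ?d b \<le> i2" using c(6) by (meson inf.cobounded2 inf_mono order_refl order_trans)
    qed
    finally have "inf ?d (sup a b) \<in> y" using ideal_down[OF y ideal_sup[OF y c(2,5)]] by blast
    moreover have "inf ?d (sup a b) \<in> F" using filter_inf[OF F(1) filter_inf[OF F(1) c(1,4)] ab] .
    ultimately show False using F(2) by blast
  qed
  moreover have "bot \<notin> F" using ideal_bot[OF y] F(2) by blast
  ultimately show ?thesis unfolding prime_filter_def proper_filter_iff using F(1) by blast
qed

theorem prime_filter_theorem:
  assumes D: "distributive_on (UNIV :: 'a::bounded_lattice set) inf sup"
    and x: "is_filter (x :: 'a set)" and y: "is_ideal y"
    and xy: "x \<inter> y = {}"
  shows "\<exists>p. prime_filter p \<and> x \<subseteq> p \<and> p \<inter> y = {}"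
proof -
  define S where "S = {p. is_filter p \<and> x \<subseteq> p \<and> p \<inter> y = {}}"
  have "\<exists>U\<in>S. \<forall>F\<in>C. F \<subseteq> U" if C: "C \<in> chains S" for C
  proof (cases "C = {}")
    case True
    then show ?thesis using x xy unfolding S_def by blast
  next
    case False
    have CS: "C \<subseteq> S" and "chain\<^sub>\<subseteq> C" using C unfolding chains_def by auto
    then have "is_filter (\<Union>C)"
      by (intro filter_Union_chain[OF False]) (auto simp: S_def)
    moreover have "x \<subseteq> \<Union>C" "\<Union>C \<inter> y = {}" using False CS unfolding S_def by auto
    ultimately show ?thesis unfolding S_def by blast
  qed
  then obtain M where "M \<in> S" and max: "\<forall>G\<in>S. M \<subseteq> G \<longrightarrow> G = M"
    using Zorn_Lemma2[of S] by blast
  then have M: "is_filter M" "x \<subseteq> M" "M \<inter> y = {}" unfolding S_def by auto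
  have "prime_filter M"
  proof (rule maximal_disjoint_filter_prime[OF D y M(1,3)])
    fix G assume "is_filter G" "M \<subseteq> G" "G \<inter> y = {}"
    then show "G = M" using max M(2) unfolding S_def by blast
  qed
  then show ?thesis using M by blast
qed

lemma prime_filter_proper: "prime_filter p \<Longrightarrow> p \<in> proper_filters"
  unfolding prime_filter_def by blast

lemma mem_polar_closure_iff_prime:
  fixes U :: "'a::bounded_lattice set set"
  assumes D: "distributive_on (UNIV :: 'a::bounded_lattice set) inf sup"
  shows "x \<in> polar_closure U \<longleftrightarrow>
    x \<in> proper_filters \<and> (\<forall>p. prime_filter p \<and> x \<subseteq> p \<longrightarrow> (\<exists>u\<in>U. u \<subseteq> p))"
    (is "_ \<longleftrightarrow> _ \<and> ?primes")
proof
  assume x: "x \<in> polar_closure U"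
  have "\<exists>u\<in>U. u \<subseteq> p" if p: "prime_filter p" "x \<subseteq> p" for p
  proof (rule ccontr)
    assume "\<not> (\<exists>u\<in>U. u \<subseteq> p)"
    then have "\<forall>u\<in>U. meets u (- p)" unfolding meets_iff by blast
    then have "- p \<in> polarX U" using prime_filter_compl[OF p(1)] unfolding polarX_def by blast
    then have "meets x (- p)" using x unfolding polarY_def by blast
    then show False using p(2) unfolding meets_iff by blast
  qed
  then show "x \<in> proper_filters \<and> ?primes" using x polarY_subset by blast
next
  assume x: "x \<in> proper_filters \<and> ?primes"
  have "meets x y" if y: "y \<in> polarX U" for y
  proof (rule ccontr)
    assume "\<not> meets x y"
    then have disj: "x \<inter> y = {}" unfolding meets_iff by blast
    have "is_ideal y" using y polarX_subset proper_ideals_is_ideal by blast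
    from prime_filter_theorem[OF D proper_filters_is_filter this disj] x
    obtain p where p: "prime_filter p" "x \<subseteq> p" "p \<inter> y = {}" by blast
    then obtain u where "u \<in> U" "u \<subseteq> p" using x by blast
    moreover have "meets u y" using y \<open>u \<in> U\<close> unfolding polarX_def by simp
    ultimately show False using p(3) unfolding meets_iff by blast
  qed
  then show "x \<in> polar_closure U" using x unfolding polarY_def by blast
qed

lemma mem_Galois_set_iff_prime:
  fixes A :: "'a::bounded_lattice set set"
  assumes D: "distributive_on (UNIV :: 'a::bounded_lattice set) inf sup" and A: "A \<in> Galois_sets"
  shows "x \<in> A \<longleftrightarrow> x \<in> proper_filters \<and> (\<forall>p. prime_filter p \<and> x \<subseteq> p \<longrightarrow> p \<in> A)"
proof -
  have "(\<exists>u\<in>A. u \<subseteq> p) \<longleftrightarrow> p \<in> A" if "prime_filter p" for p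
    using Galois_sets_upward[OF A _ _ prime_filter_proper[OF that]] by blast
  then show ?thesis
    using mem_polar_closure_iff_prime[OF D, of x A] Galois_sets_closed[OF A] by simp
qed

lemma mem_G_join_iff_prime:
  fixes B C :: "'a::bounded_lattice set set"
  assumes D: "distributive_on (UNIV :: 'a::bounded_lattice set) inf sup"
    and B: "B \<in> Galois_sets" and C: "C \<in> Galois_sets"
  shows "x \<in> G_join B C \<longleftrightarrow>
    x \<in> proper_filters \<and> (\<forall>p. prime_filter p \<and> x \<subseteq> p \<longrightarrow> p \<in> B \<or> p \<in> C)"
proof -
  have "(\<exists>u\<in>B \<union> C. u \<subseteq> p) \<longleftrightarrow> p \<in> B \<or> p \<in> C" if "prime_filter p" for p
    using Galois_sets_upward[OF B _ _ prime_filter_proper[OF that]]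
      Galois_sets_upward[OF C _ _ prime_filter_proper[OF that]] by blast
  then show ?thesis
    unfolding G_join_def using mem_polar_closure_iff_prime[OF D, of x "B \<union> C"] by simp
qed

lemma distributive_Galois_sets:
  assumes D: "distributive_on (UNIV :: 'a::bounded_lattice set) inf sup"
  shows "distributive_on (Galois_sets :: 'a set set set) (\<inter>) G_join"
  unfolding distributive_on_def
proof (intro ballI)
  fix A B C :: "'a set set"
  assume A: "A \<in> Galois_sets" and B: "B \<in> Galois_sets" and C: "C \<in> Galois_sets"
  show "A \<inter> G_join B C = G_join (A \<inter> B) (A \<inter> C)"
  proof (rule set_eqI)
    fix x
    show "x \<in> A \<inter> G_join B C \<longleftrightarrow> x \<in> G_join (A \<inter> B) (A \<inter> C)"
      unfolding mem_G_join_iff_prime[OF D Galois_sets_Int[OF A B] Galois_sets_Int[OF A C]]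
        Int_iff mem_G_join_iff_prime[OF D B C] mem_Galois_set_iff_prime[OF D A, of x]
      by blast
  qed
qed

lemma prime_filter_in_Galois_set_or_star:
  assumes anti: "antimono nu" and cm: "\<And>a. sup a (nu a) = top"
    and A: "A \<in> Galois_sets" and p: "prime_filter p"
  shows "p \<in> A \<or> p \<in> star nu A"
proof (cases "p \<in> A")
  case False
  then have "p \<notin> polar_closure A" using Galois_sets_closed[OF A] by simp
  then obtain y where y: "y \<in> polarX A" "\<not> meets p y"
    using prime_filter_proper[OF p] unfolding polarY_def by blast
  have "\<exists>c\<in>z. nu c \<in> p" if z: "z \<in> A" for z
  proof -
    have "meets z y" using y(1) z unfolding polarX_def by simp
    then obtain c where "c \<in> z" "c \<in> y" unfolding meets_iff by blast
    moreover have "sup c (nu c) \<in> p"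
      using cm filter_top[OF proper_filters_is_filter[OF prime_filter_proper[OF p]]] by simp
    ultimately show ?thesis using p y(2) unfolding prime_filter_def meets_iff by blast
  qed
  then have "p \<in> star nu A"
    by (simp add: mem_star_iff[OF anti Galois_sets_subset[OF A]] prime_filter_proper[OF p])
  then show ?thesis ..
qed simp

lemma G_join_star:
  fixes nu :: "'a::bounded_lattice \<Rightarrow> 'a"
  assumes D: "distributive_on (UNIV :: 'a::bounded_lattice set) inf sup"
    and anti: "antimono nu" and cm: "\<And>a. sup a (nu a) = top" and A: "A \<in> Galois_sets"
  shows "G_join A (star nu A) = proper_filters"
  using prime_filter_in_Galois_set_or_star[OF anti cm A]
  by (auto simp: set_eq_iff mem_G_join_iff_prime[OF D A star_in_Galois_sets])

theorem theorem5p4: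
  fixes nu :: "'a::bounded_lattice \<Rightarrow> 'a" and V :: variety
  assumes "antimono nu"
    and "in_variety V UNIV (\<le>) inf sup bot top nu"
  shows "in_variety V (Galois_sets :: 'a set set set) (\<subseteq>) (\<inter>) G_join {} proper_filters (star nu)"
proof -
  have M: "M_alg UNIV (\<le>) inf sup bot top nu"
    using assms(2) unfolding in_variety_def by blast
  then have nu_sup: "\<And>a b. nu (sup a b) = inf (nu a) (nu b)" unfolding M_alg_def by blast
  note complex_M = M_alg_Galois_sets[OF M assms(1)]
  note involution = star_star_Galois_set[OF assms(1) _ nu_sup]
  note orthocomplement = Int_star_empty[OF assms(1) _ Galois_sets_subset]
  show ?thesis
  proof (cases V)
    case VG
    then show ?thesis using assms(2) complex_M subset_star_star[OF assms(1) _ Galois_sets_subset]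
      by (auto simp: in_variety_def)
  next
    case VINV
    then show ?thesis using assms(2) complex_M involution by (auto simp: in_variety_def)
  next
    case VDMA
    then show ?thesis using assms(2) complex_M involution distributive_Galois_sets
      by (auto simp: in_variety_def)
  next
    case VO
    then show ?thesis using assms(2) complex_M involution orthocomplement
      by (auto simp: in_variety_def)
  next
    case VBA
    then show ?thesis using assms(2) complex_M distributive_Galois_sets orthocomplement
        G_join_star[OF _ assms(1)]
      by (auto simp: in_variety_def)
  qed (simp add: in_variety_def complex_M)
qed

end
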